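(* Fix an initial cost $\omega \in \mathbb{R}^n$ and consider, for a step size $\alpha>0$, the sequence $(\omega_k)_{k\ge 0}$ defined below (under the stated tie-breaking convention). Then exactly one of the following holds: (i) $B(\omega)$ is non-empty, and there is $\alpha_{\max}>0$ such that for every $\alpha\in(0,\alpha_{\max})$ there exists $n\in\mathbb{N}$ with $y(\omega_n)\in B(\omega)$ and $y(\omega_k)=y(\omega)$ for all $k<n$; (ii) $B(\omega)$ is empty, and for every $\alpha>0$ we have $y(\omega_k)=y(\omega)$ for all $k\in\mathbb{N}$.
   Context: Let $Y\subset\mathbb{R}^n$ be a finite non-empty set. For $\omega\in\mathbb{R}^n$, $y(\omega)$ denotes a chosen element of $\operatorname{argmin}_{y\in Y}\langle \omega,y\rangle$ (the "solver"). Let $\ell:\mathbb{R}^n\to\mathbb{R}$ be differentiable and write $g(y)=\nabla \ell(y)$. Given $\omega\in\mathbb{R}^n$ and $\alpha>0$, define $\omega_0=\omega$ and $\omega_{k+1}=\omega_k+\alpha\, g(y(\omega_k))$ for $k\ge 0$ (i.e. $\omega_{k+1}=\omega_k-\alpha\Delta_k$ with the "Identity update" $\Delta_k=-g(y(\omega_k))$). Tie-breaking convention: for every $k\ge1$, if $y(\omega_{k-1})$ is a minimizer of $\langle \omega_k,\cdot\rangle$ over $Y$, then $y(\omega_k)=y(\omega_{k-1})$. Define the linearized loss at $y(\omega)$ by $f(y')=\ell(y(\omega))+\langle y'-y(\omega),\, g(y(\omega))\rangle$ for $y'\in Y$, and the set of better solutions $B(\omega)=\{y'\in Y: f(y')<f(y(\omega))\}$.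 *)

theory Defs
  imports "HOL-Analysis.Analysis"
begin

definition argmin_set :: "(real^'n) set \<Rightarrow> real^'n \<Rightarrow> (real^'n) set" where
  "argmin_set Y w = {v \<in> Y. \<forall>v'\<in>Y. w \<bullet> v \<le> w \<bullet> v'}"

primrec omega_seq :: "(real^'n \<Rightarrow> real^'n) \<Rightarrow> (real^'n \<Rightarrow> real^'n) \<Rightarrow> real
    \<Rightarrow> real^'n \<Rightarrow> nat \<Rightarrow> real^'n" where
  "omega_seq y g \<alpha> \<omega> 0 = \<omega>"
| "omega_seq y g \<alpha> \<omega> (Suc k) =
     omega_seq y g \<alpha> \<omega> k + \<alpha> *\<^sub>R g (y (omega_seq y g \<alpha> \<omega> k))"

definition lin_loss :: "(real^'n \<Rightarrow> real) \<Rightarrow> (real^'n \<Rightarrow> real^'n) \<Rightarrow> (real^'n \<Rightarrow> real^'n)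
    \<Rightarrow> real^'n \<Rightarrow> real^'n \<Rightarrow> real" where
  "lin_loss L g y \<omega> v = L (y \<omega>) + (v - y \<omega>) \<bullet> g (y \<omega>)"

definition better_set :: "(real^'n) set \<Rightarrow> (real^'n \<Rightarrow> real) \<Rightarrow> (real^'n \<Rightarrow> real^'n)
    \<Rightarrow> (real^'n \<Rightarrow> real^'n) \<Rightarrow> real^'n \<Rightarrow> (real^'n) set" where
  "better_set Y L g y \<omega> = {v \<in> Y. lin_loss L g y \<omega> v < lin_loss L g y \<omega> (y \<omega>)}"

end

theory Submission
  imports Defs
begin

text \<open>While the solver keeps returning \<open>y0 = y \<omega>\<close>, the iterates move along the ray
  \<open>\<omega> + t g0\<close> with \<open>g0 = g y0\<close>, and the better solutions are exactly the \<open>v \<in> Y\<close> with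
  \<open>g0 \<bullet> v < g0 \<bullet> y0\<close>. If there is none, \<open>y0\<close> minimizes \<open>g0\<close> and hence every iterate, so by
  the tie-breaking rule the solver never moves. If some \<open>b\<close> is better, \<open>\<omega>\<^sub>k \<bullet> (b - y0)\<close>
  decreases linearly in \<open>k\<close>, so the solver must eventually leave \<open>y0\<close>; at the first exit
  \<open>y0\<close> has stopped being a minimizer, and comparing the new solution with \<open>y0\<close> at the two
  consecutive costs shows it is better. This works for every step size, so any \<open>\<alpha>max\<close> will
  do.\<close>

lemma argmin_setD:
  assumes "v \<in> argmin_set Y w"
  shows "v \<in> Y" and "\<And>v'. v' \<in> Y \<Longrightarrow> w \<bullet> v \<le> w \<bullet> v'"
  using assms by (auto simp: argmin_set_def)

lemma argmin_set_add_scaled: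
  assumes "v \<in> argmin_set Y w" "v \<in> argmin_set Y d" "0 \<le> \<alpha>"
  shows "v \<in> argmin_set Y (w + \<alpha> *\<^sub>R d)"
  using assms by (auto simp: argmin_set_def inner_add_left intro: add_mono mult_left_mono)

lemma argmin_set_leave_decreases:
  assumes v: "v \<in> argmin_set Y w" and u: "u \<in> argmin_set Y (w + \<alpha> *\<^sub>R d)"
    and not_min: "v \<notin> argmin_set Y (w + \<alpha> *\<^sub>R d)" and "0 < \<alpha>"
  shows "d \<bullet> u < d \<bullet> v"
proof -
  obtain v' where "v' \<in> Y" "(w + \<alpha> *\<^sub>R d) \<bullet> v' < (w + \<alpha> *\<^sub>R d) \<bullet> v"
    using not_min argmin_setD(1)[OF v] by (auto simp: argmin_set_def not_le)
  then have "(w + \<alpha> *\<^sub>R d) \<bullet> u < (w + \<alpha> *\<^sub>R d) \<bullet> v"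
    using argmin_setD(2)[OF u] by fastforce
  moreover have "w \<bullet> v \<le> w \<bullet> u"
    using argmin_setD(2)[OF v] argmin_setD(1)[OF u] .
  ultimately have "\<alpha> * (d \<bullet> u) < \<alpha> * (d \<bullet> v)"
    by (simp add: inner_add_left)
  then show ?thesis using \<open>0 < \<alpha>\<close> by simp
qed

lemma better_set_eq:
  "better_set Y L g y \<omega> = {v \<in> Y. g (y \<omega>) \<bullet> v < g (y \<omega>) \<bullet> y \<omega>}"
  unfolding better_set_def lin_loss_def
  by (simp add: inner_diff_left inner_diff_right inner_commute[of _ "g (y \<omega>)"])

lemma omega_seq_while_constant:
  assumes "\<forall>k<n. y (omega_seq y g \<alpha> \<omega> k) = y \<omega>"
  shows "omega_seq y g \<alpha> \<omega> n = \<omega> + (real n * \<alpha>) *\<^sub>R g (y \<omega>)"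
  using assms
proof (induction n)
  case (Suc n)
  have "y (omega_seq y g \<alpha> \<omega> n) = y \<omega>" using Suc.prems by simp
  then show ?case by (simp add: Suc.IH Suc.prems algebra_simps)
qed simp

lemma omega_seq_constant_if_no_better:
  assumes solver: "\<forall>w. y w \<in> argmin_set Y w"
    and tie: "\<And>k. y (omega_seq y g \<alpha> \<omega> k) \<in> argmin_set Y (omega_seq y g \<alpha> \<omega> (Suc k)) \<Longrightarrow>
       y (omega_seq y g \<alpha> \<omega> (Suc k)) = y (omega_seq y g \<alpha> \<omega> k)"
    and no_better: "better_set Y L g y \<omega> = {}" and "0 < \<alpha>"
  shows "y (omega_seq y g \<alpha> \<omega> k) = y \<omega>"
proof (induction k)
  case (Suc k)
  have "y \<omega> \<in> argmin_set Y (g (y \<omega>))"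
    using no_better argmin_setD(1)[OF solver[rule_format]]
    by (auto simp: better_set_eq argmin_set_def not_less)
  then have "y \<omega> \<in> argmin_set Y (omega_seq y g \<alpha> \<omega> (Suc k))"
    using argmin_set_add_scaled solver Suc.IH \<open>0 < \<alpha>\<close> by (metis less_imp_le omega_seq.simps(2))
  then show ?case using tie Suc.IH by metis
qed simp

lemma omega_seq_leaves_if_better:
  assumes solver: "\<forall>w. y w \<in> argmin_set Y w"
    and b: "b \<in> better_set Y L g y \<omega>" and "0 < \<alpha>"
  shows "\<exists>n. y (omega_seq y g \<alpha> \<omega> n) \<noteq> y \<omega>"
proof (rule ccontr)
  assume "\<not> ?thesis"
  then have stays: "\<forall>k. y (omega_seq y g \<alpha> \<omega> k) = y \<omega>" by simp
  define c where "c = g (y \<omega>) \<bullet> (b - y \<omega>)"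
  have "c < 0" "b \<in> Y"
    using b by (auto simp: better_set_eq c_def inner_diff_right)
  then have rate: "\<alpha> * - c > 0" using \<open>0 < \<alpha>\<close> by (simp add: mult_pos_neg)
  obtain n :: nat where "real n > (\<omega> \<bullet> (b - y \<omega>)) / (\<alpha> * - c)"
    using reals_Archimedean2 by blast
  then have "\<omega> \<bullet> (b - y \<omega>) < real n * (\<alpha> * - c)"
    unfolding pos_divide_less_eq[OF rate] .
  then have "\<omega> \<bullet> (b - y \<omega>) + real n * (\<alpha> * c) < 0"
    by simp
  also have "\<omega> \<bullet> (b - y \<omega>) + real n * (\<alpha> * c) = omega_seq y g \<alpha> \<omega> n \<bullet> (b - y \<omega>)"
    using omega_seq_while_constant[of n y g \<alpha> \<omega>] stays
    by (simp add: inner_add_left c_def)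
  finally show False
    using argmin_setD(2)[OF solver[rule_format], of b "omega_seq y g \<alpha> \<omega> n"] stays \<open>b \<in> Y\<close>
    by (simp add: inner_diff_right)
qed

lemma omega_seq_first_exit_better:
  assumes solver: "\<forall>w. y w \<in> argmin_set Y w"
    and tie: "\<And>k. y (omega_seq y g \<alpha> \<omega> k) \<in> argmin_set Y (omega_seq y g \<alpha> \<omega> (Suc k)) \<Longrightarrow>
       y (omega_seq y g \<alpha> \<omega> (Suc k)) = y (omega_seq y g \<alpha> \<omega> k)"
    and exit: "y (omega_seq y g \<alpha> \<omega> n) \<noteq> y \<omega>"
    and before: "\<forall>k<n. y (omega_seq y g \<alpha> \<omega> k) = y \<omega>" and "0 < \<alpha>"
  shows "y (omega_seq y g \<alpha> \<omega> n) \<in> better_set Y L g y \<omega>"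
proof -
  obtain m where n: "n = Suc m"
    using exit by (cases n) auto
  have ym: "y (omega_seq y g \<alpha> \<omega> m) = y \<omega>"
    using before n by simp
  have step: "omega_seq y g \<alpha> \<omega> n = omega_seq y g \<alpha> \<omega> m + \<alpha> *\<^sub>R g (y \<omega>)"
    by (simp add: n ym)
  have "y \<omega> \<notin> argmin_set Y (omega_seq y g \<alpha> \<omega> n)"
    using tie[of m] exit by (auto simp: n ym)
  then have "g (y \<omega>) \<bullet> y (omega_seq y g \<alpha> \<omega> n) < g (y \<omega>) \<bullet> y \<omega>"
    using argmin_set_leave_decreases[OF _ _ _ \<open>0 < \<alpha>\<close>] solver ym step by metis
  then show ?thesis
    using argmin_setD(1)[OF solver[rule_format]] by (simp add: better_set_eq)
qed

theorem theorem1: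
  fixes Y :: "(real^'n) set" and y :: "real^'n \<Rightarrow> real^'n"
    and L :: "real^'n \<Rightarrow> real" and g :: "real^'n \<Rightarrow> real^'n" and \<omega> :: "real^'n"
  assumes "finite Y" and "Y \<noteq> {}"
    and solver: "\<forall>w. y w \<in> argmin_set Y w"
    and grad: "\<forall>x. (L has_derivative (\<lambda>h. g x \<bullet> h)) (at x)"
    and tie: "\<forall>\<alpha>>0. \<forall>k.
       y (omega_seq y g \<alpha> \<omega> k) \<in> argmin_set Y (omega_seq y g \<alpha> \<omega> (Suc k)) \<longrightarrow>
       y (omega_seq y g \<alpha> \<omega> (Suc k)) = y (omega_seq y g \<alpha> \<omega> k)"
  shows "(better_set Y L g y \<omega> \<noteq> {} \<and>
           (\<exists>\<alpha>max>0. \<forall>\<alpha>. 0 < \<alpha> \<and> \<alpha> < \<alpha>max \<longrightarrow>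
              (\<exists>n. y (omega_seq y g \<alpha> \<omega> n) \<in> better_set Y L g y \<omega> \<and>
                   (\<forall>k<n. y (omega_seq y g \<alpha> \<omega> k) = y \<omega>))))
       \<or> (better_set Y L g y \<omega> = {} \<and>
           (\<forall>\<alpha>>0. \<forall>k. y (omega_seq y g \<alpha> \<omega> k) = y \<omega>))"
proof (cases "better_set Y L g y \<omega> = {}")
  case True
  then show ?thesis
    using omega_seq_constant_if_no_better[OF solver] tie by blast
next
  case False
  then obtain b where b: "b \<in> better_set Y L g y \<omega>" by blast
  have "\<exists>n. y (omega_seq y g \<alpha> \<omega> n) \<in> better_set Y L g y \<omega> \<and>
            (\<forall>k<n. y (omega_seq y g \<alpha> \<omega> k) = y \<omega>)" if "0 < \<alpha>" for \<alpha>
  proof -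
    define n where "n = (LEAST n. y (omega_seq y g \<alpha> \<omega> n) \<noteq> y \<omega>)"
    have "y (omega_seq y g \<alpha> \<omega> n) \<noteq> y \<omega>"
      unfolding n_def by (rule LeastI_ex) (rule omega_seq_leaves_if_better[OF solver b that])
    moreover have "\<forall>k<n. y (omega_seq y g \<alpha> \<omega> k) = y \<omega>"
      unfolding n_def using not_less_Least by blast
    ultimately show ?thesis
      using omega_seq_first_exit_better[OF solver _ _ _ that] tie that by blast
  qed
  then show ?thesis
    using False by (intro disjI1) (auto intro: exI[of _ 1])
qed

end
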